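(* Let $\alpha\in(0,\tfrac12)$ and $0<c<C'$. For $N=|\{k\in\mathbb{Z}^2:|k|<k_{\mathrm F}\}|$, consider the annulus $\mathcal A=\{p\in\mathbb{R}^2:k_{\mathrm F}\le|p|<k_{\mathrm F}+\Delta\}$ with thickness $\Delta$ satisfying $cN^{-\alpha}<\Delta<C'N^{-\alpha}$. Then there is a constant $C>0$ (independent of $N$, $\Delta$ and $k$) such that for all $k\in\mathbb{Z}^2\setminus\{0\}$, $$|\mathcal A\cap(\mathcal A+k)\cap\mathbb{Z}^2|\le C\big(N^{\frac34-\frac52\alpha}+N^{\frac14-\frac12\alpha}\big).$$
   Context: $k_{\mathrm F}>0$ is the Fermi momentum with $B_{\mathrm F}=\{k\in\mathbb{Z}^2:|k|<k_{\mathrm F}\}$, $N=|B_{\mathrm F}|$, and $k_{\mathrm F}^2=\frac12(\inf_{p\notin B_{\mathrm F}}|p|^2+\sup_{q\in B_{\mathrm F}}|q|^2)$ (so $k_{\mathrm F}\sim N^{1/2}$). *)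

theory Defs
  imports "HOL-Analysis.Analysis"
begin

text \<open>Lattice points of Z^2 are represented as pairs of integers; the plane R^2 as real \<times> real
  (whose library norm is the Euclidean norm sqrt(x^2+y^2)).\<close>

definition to_R2 :: "int \<times> int \<Rightarrow> real \<times> real" where
  "to_R2 q = (real_of_int (fst q), real_of_int (snd q))"

definition fermi_ball :: "real \<Rightarrow> (int \<times> int) set" where
  "fermi_ball kF = {q. norm (to_R2 q) < kF}"

definition admissible_kF :: "real \<Rightarrow> bool" where
  "admissible_kF kF \<longleftrightarrow> kF > 0 \<and>
     kF\<^sup>2 = (Inf {(norm (to_R2 p))\<^sup>2 | p. p \<notin> fermi_ball kF}
              + Sup {(norm (to_R2 q))\<^sup>2 | q. q \<in> fermi_ball kF}) / 2"

definition annulus :: "real \<Rightarrow> real \<Rightarrow> (real \<times> real) set" where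
  "annulus kF \<Delta> = {p. kF \<le> norm p \<and> norm p < kF + \<Delta>}"

end

theory Submission
  imports Defs
begin

(*
  Write R = k_F and T = (k_F + \<Delta>)^2 - k_F^2, so that T = O(N^(1/2 - \<alpha>)) and N ~ R^2.  The points
  of A \<inter> (A + k) \<inter> Z^2 lie in the lens R^2 \<le> |p|^2, |p - k|^2 < R^2 + T.  In the coordinates
  P = p \<cdot> k, U = p \<times> k the lens becomes |2P - |k|^2| < T, with U^2 in a band of width
  |k|^2 T + T^2/4 and, for fixed U, P^2 in a band of width |k|^2 T; distinct lattice points have
  (P, U) at distance at least |k|.  If |k|^2 \<le> R the U-band lies at distance about |k| R from 0,
  so it contains few integers, and each fibre U = const contains O(1 + \<surd>T) points.  If |k|^2 > R
  the cells of side |k|/\<surd>2 in the (P, U)-plane contain at most one point each.  Either way the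
  lens has O((1 + \<surd>T)(1 + T/\<surd>R + T^2/R)) lattice points, which is
  O(N^(1/4 - \<alpha>/2) + N^(3/4 - 5\<alpha>/2)).
*)

section \<open>Counting integer parts\<close>

lemma floor_div_eq_imp_dist_less:
  fixes a b d :: real
  assumes "d > 0" "\<lfloor>a / d\<rfloor> = \<lfloor>b / d\<rfloor>"
  shows "\<bar>a - b\<bar> < d"
proof -
  have "\<bar>a / d - b / d\<bar> < 1"
    using assms(2) floor_correct[of "a / d"] floor_correct[of "b / d"] by linarith
  then show ?thesis
    using assms(1) by (simp add: diff_divide_distrib[symmetric] abs_divide divide_less_eq)
qed

lemma inj_on_floor_div:
  fixes f :: "'a \<Rightarrow> real"
  assumes "d > 0" and "\<And>x y. x \<in> X \<Longrightarrow> y \<in> X \<Longrightarrow> x \<noteq> y \<Longrightarrow> d \<le> \<bar>f x - f y\<bar>"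
  shows "inj_on (\<lambda>x. \<lfloor>f x / d\<rfloor>) X"
  using assms floor_div_eq_imp_dist_less by (fastforce intro: inj_onI)

lemma card_floor_div_image_le:
  fixes f :: "'a \<Rightarrow> real"
  assumes "d > 0" "a \<le> b" and "\<And>x. x \<in> X \<Longrightarrow> a \<le> f x \<and> f x \<le> b"
  shows "real (card ((\<lambda>x. \<lfloor>f x / d\<rfloor>) ` X)) \<le> (b - a) / d + 2"
proof -
  have "(\<lambda>x. \<lfloor>f x / d\<rfloor>) ` X \<subseteq> {\<lfloor>a / d\<rfloor>..\<lfloor>b / d\<rfloor>}"
    using assms by (auto intro!: floor_mono divide_right_mono)
  then have "card ((\<lambda>x. \<lfloor>f x / d\<rfloor>) ` X) \<le> card {\<lfloor>a / d\<rfloor>..\<lfloor>b / d\<rfloor>}"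
    by (intro card_mono) auto
  moreover have "\<lfloor>a / d\<rfloor> \<le> \<lfloor>b / d\<rfloor>"
    using assms by (intro floor_mono divide_right_mono) auto
  ultimately have "real (card ((\<lambda>x. \<lfloor>f x / d\<rfloor>) ` X)) \<le> real (nat (\<lfloor>b / d\<rfloor> - \<lfloor>a / d\<rfloor> + 1))"
    by simp
  also have "\<dots> = \<lfloor>b / d\<rfloor> - \<lfloor>a / d\<rfloor> + 1"
    using \<open>\<lfloor>a / d\<rfloor> \<le> \<lfloor>b / d\<rfloor>\<close> by simp
  also have "\<dots> \<le> b / d - a / d + 2"
    using floor_correct[of "a / d"] floor_correct[of "b / d"] by linarith
  finally show ?thesis
    by (simp add: diff_divide_distrib)
qed

lemma card_floor_div_image_abs_le:
  fixes f :: "'a \<Rightarrow> real"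
  assumes "d > 0" "lo \<le> hi" and "\<And>x. x \<in> X \<Longrightarrow> lo \<le> \<bar>f x\<bar> \<and> \<bar>f x\<bar> \<le> hi"
  shows "real (card ((\<lambda>x. \<lfloor>f x / d\<rfloor>) ` X)) \<le> 2 * ((hi - lo) / d + 2)"
proof -
  define pos where "pos = {x \<in> X. 0 \<le> f x}"
  define neg where "neg = {x \<in> X. f x < 0}"
  have "X = pos \<union> neg"
    unfolding pos_def neg_def by auto
  then have "(\<lambda>x. \<lfloor>f x / d\<rfloor>) ` X = (\<lambda>x. \<lfloor>f x / d\<rfloor>) ` pos \<union> (\<lambda>x. \<lfloor>f x / d\<rfloor>) ` neg"
    by (metis image_Un)
  then have "real (card ((\<lambda>x. \<lfloor>f x / d\<rfloor>) ` X))
      \<le> real (card ((\<lambda>x. \<lfloor>f x / d\<rfloor>) ` pos)) + real (card ((\<lambda>x. \<lfloor>f x / d\<rfloor>) ` neg))"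
    by (metis card_Un_le of_nat_add of_nat_mono)
  moreover have "real (card ((\<lambda>x. \<lfloor>f x / d\<rfloor>) ` pos)) \<le> (hi - lo) / d + 2"
  proof (rule card_floor_div_image_le[OF assms(1,2)])
    show "lo \<le> f x \<and> f x \<le> hi" if "x \<in> pos" for x
      using that assms(3)[of x] by (simp add: pos_def)
  qed
  moreover have "real (card ((\<lambda>x. \<lfloor>f x / d\<rfloor>) ` neg)) \<le> (- lo - - hi) / d + 2"
  proof (rule card_floor_div_image_le)
    show "- hi \<le> f x \<and> f x \<le> - lo" if "x \<in> neg" for x
      using that assms(3)[of x] by (auto simp: neg_def)
  qed (use assms in auto)
  ultimately show ?thesis
    by (simp add: diff_divide_distrib)
qed

lemma abs_in_sqrt_band:
  fixes u L M :: real
  assumes "L \<le> u\<^sup>2" "u\<^sup>2 \<le> M"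
  shows "sqrt (max 0 L) \<le> \<bar>u\<bar> \<and> \<bar>u\<bar> \<le> sqrt (max 0 M)"
  using assms real_sqrt_le_mono[of "max 0 L" "u\<^sup>2"] real_sqrt_le_mono[of "u\<^sup>2" "max 0 M"]
  by auto

lemma sqrt_band_width_le_sqrt:
  fixes L M :: real
  assumes "L \<le> M"
  shows "sqrt (max 0 M) - sqrt (max 0 L) \<le> sqrt (M - L)"
proof -
  have "sqrt (max 0 M) \<le> sqrt (max 0 L) + sqrt (M - L)"
    using assms real_sqrt_le_mono[of "max 0 M" "max 0 L + (M - L)"] sqrt_add_le_add_sqrt[of "max 0 L" "M - L"]
    by (auto simp: max_def)
  then show ?thesis
    by simp
qed

lemma sqrt_band_width_le_div:
  fixes L M :: real
  assumes "L \<le> M"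
  shows "sqrt (max 0 M) * (sqrt (max 0 M) - sqrt (max 0 L)) \<le> M - L"
proof -
  have "sqrt (max 0 L) \<le> sqrt (max 0 M)"
    using assms by (auto intro: real_sqrt_le_mono)
  then have "sqrt (max 0 M) * (sqrt (max 0 M) - sqrt (max 0 L))
      \<le> (sqrt (max 0 M) + sqrt (max 0 L)) * (sqrt (max 0 M) - sqrt (max 0 L))"
    by (intro mult_right_mono) auto
  also have "\<dots> = max 0 M - max 0 L"
    by (simp add: algebra_simps)
  also have "\<dots> \<le> M - L"
    using assms by (auto simp: max_def)
  finally show ?thesis .
qed

lemma card_floor_div_image_sq_band:
  fixes f :: "'a \<Rightarrow> real"
  assumes "d > 0" "L \<le> M" and "\<And>x. x \<in> X \<Longrightarrow> L \<le> (f x)\<^sup>2 \<and> (f x)\<^sup>2 \<le> M"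
  shows "real (card ((\<lambda>x. \<lfloor>f x / d\<rfloor>) ` X)) \<le> 2 * ((sqrt (max 0 M) - sqrt (max 0 L)) / d + 2)"
  using assms abs_in_sqrt_band by (intro card_floor_div_image_abs_le) (auto intro: real_sqrt_le_mono)

lemma card_le_card_floor_div_grid:
  fixes f g :: "'a \<Rightarrow> real"
  assumes "finite X" "c > 0"
    and "\<And>x y. x \<in> X \<Longrightarrow> y \<in> X \<Longrightarrow> x \<noteq> y \<Longrightarrow> 2 * c\<^sup>2 \<le> (f x - f y)\<^sup>2 + (g x - g y)\<^sup>2"
  shows "card X \<le> card ((\<lambda>x. \<lfloor>f x / c\<rfloor>) ` X) * card ((\<lambda>x. \<lfloor>g x / c\<rfloor>) ` X)"
proof -
  let ?cell = "\<lambda>x. (\<lfloor>f x / c\<rfloor>, \<lfloor>g x / c\<rfloor>)"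
  have "inj_on ?cell X"
  proof (rule inj_onI, rule ccontr)
    fix x y assume "x \<in> X" "y \<in> X" "?cell x = ?cell y" "x \<noteq> y"
    then have "\<bar>f x - f y\<bar> < c" "\<bar>g x - g y\<bar> < c"
      using \<open>c > 0\<close> floor_div_eq_imp_dist_less by auto
    then have "(f x - f y)\<^sup>2 < c\<^sup>2" "(g x - g y)\<^sup>2 < c\<^sup>2"
      using \<open>c > 0\<close> by (metis abs_le_square_iff abs_of_pos not_le)+
    then show False
      using assms(3)[OF \<open>x \<in> X\<close> \<open>y \<in> X\<close> \<open>x \<noteq> y\<close>] by linarith
  qed
  moreover have "?cell ` X \<subseteq> (\<lambda>x. \<lfloor>f x / c\<rfloor>) ` X \<times> (\<lambda>x. \<lfloor>g x / c\<rfloor>) ` X"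
    by auto
  ultimately have "card X \<le> card ((\<lambda>x. \<lfloor>f x / c\<rfloor>) ` X \<times> (\<lambda>x. \<lfloor>g x / c\<rfloor>) ` X)"
    using assms(1) by (intro card_inj_on_le) auto
  then show ?thesis
    by (simp add: card_cartesian_product)
qed

lemma card_le_card_image_mult_fibre_bound:
  fixes m :: real
  assumes "finite X" and "\<And>u. u \<in> f ` X \<Longrightarrow> real (card {x \<in> X. f x = u}) \<le> m"
  shows "real (card X) \<le> real (card (f ` X)) * m"
proof -
  have "X = (\<Union>u \<in> f ` X. {x \<in> X. f x = u})"
    by auto
  then have "card X \<le> (\<Sum>u \<in> f ` X. card {x \<in> X. f x = u})"
    by (metis assms(1) card_UN_le finite_imageI)
  then have "real (card X) \<le> (\<Sum>u \<in> f ` X. real (card {x \<in> X. f x = u}))"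
    by (metis of_nat_le_iff of_nat_sum)
  also have "\<dots> \<le> real (card (f ` X)) * m"
    using sum_bounded_above[of "f ` X" "\<lambda>u. real (card {x \<in> X. f x = u})" m] assms(2) by simp
  finally show ?thesis .
qed

section \<open>Lattice arithmetic\<close>

definition sq_norm_int :: "int \<times> int \<Rightarrow> int" where
  "sq_norm_int p = (fst p)\<^sup>2 + (snd p)\<^sup>2"

definition dot_int :: "int \<times> int \<Rightarrow> int \<times> int \<Rightarrow> int" where
  "dot_int p q = fst p * fst q + snd p * snd q"

definition cross_int :: "int \<times> int \<Rightarrow> int \<times> int \<Rightarrow> int" where
  "cross_int p q = fst p * snd q - snd p * fst q"

lemma dot_int_sq_plus_cross_int_sq:
  "(dot_int p q)\<^sup>2 + (cross_int p q)\<^sup>2 = sq_norm_int p * sq_norm_int q"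
  unfolding dot_int_def cross_int_def sq_norm_int_def by (simp add: power2_eq_square algebra_simps)

lemma sq_norm_int_diff: "sq_norm_int (p - q) = sq_norm_int p - 2 * dot_int p q + sq_norm_int q"
  unfolding dot_int_def sq_norm_int_def by (simp add: power2_eq_square algebra_simps)

lemma dot_int_diff: "dot_int (p - q) k = dot_int p k - dot_int q k"
  unfolding dot_int_def by (simp add: algebra_simps)

lemma cross_int_diff: "cross_int (p - q) k = cross_int p k - cross_int q k"
  unfolding cross_int_def by (simp add: algebra_simps)

lemma sq_norm_int_ge_1:
  assumes "p \<noteq> 0"
  shows "1 \<le> sq_norm_int p"
proof -
  have "fst p \<noteq> 0 \<or> snd p \<noteq> 0"
    using assms by (simp add: prod_eq_iff)
  then have "0 < (fst p)\<^sup>2 + (snd p)\<^sup>2"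
    by (auto simp: add_pos_nonneg add_nonneg_pos)
  then show ?thesis
    by (simp add: sq_norm_int_def)
qed

lemma norm_to_R2_sq: "(norm (to_R2 p))\<^sup>2 = of_int (sq_norm_int p)"
  unfolding to_R2_def sq_norm_int_def by (simp add: norm_Pair)

lemma to_R2_diff: "to_R2 (p - q) = to_R2 p - to_R2 q"
  unfolding to_R2_def by simp

lemma dot_cross_separated:
  assumes "p \<noteq> q"
  shows "real_of_int (sq_norm_int k)
    \<le> (of_int (dot_int p k) - of_int (dot_int q k))\<^sup>2 + (of_int (cross_int p k) - of_int (cross_int q k))\<^sup>2"
proof -
  have "(dot_int p k - dot_int q k)\<^sup>2 + (cross_int p k - cross_int q k)\<^sup>2
      = sq_norm_int (p - q) * sq_norm_int k"
    by (simp flip: dot_int_diff cross_int_diff add: dot_int_sq_plus_cross_int_sq)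
  moreover have "1 \<le> sq_norm_int (p - q)"
    using assms by (intro sq_norm_int_ge_1) simp
  moreover have "0 \<le> sq_norm_int k"
    by (simp add: sq_norm_int_def)
  ultimately have "sq_norm_int k \<le> (dot_int p k - dot_int q k)\<^sup>2 + (cross_int p k - cross_int q k)\<^sup>2"
    by (simp add: mult_le_cancel_right1)
  then show ?thesis
    by (metis of_int_add of_int_diff of_int_le_iff of_int_power)
qed

section \<open>Size of the Fermi ball\<close>

lemma fermi_ball_subset_square: "fermi_ball r \<subseteq> {-\<lfloor>r\<rfloor>..\<lfloor>r\<rfloor>} \<times> {-\<lfloor>r\<rfloor>..\<lfloor>r\<rfloor>}"
proof
  fix q assume "q \<in> fermi_ball r"
  then have "norm (to_R2 q) < r"
    by (simp add: fermi_ball_def)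
  moreover have "\<bar>of_int (fst q)\<bar> \<le> norm (to_R2 q)" "\<bar>of_int (snd q)\<bar> \<le> norm (to_R2 q)"
    unfolding to_R2_def by (simp_all add: norm_Pair real_le_rsqrt)
  ultimately have "\<bar>fst q\<bar> \<le> \<lfloor>r\<rfloor>" "\<bar>snd q\<bar> \<le> \<lfloor>r\<rfloor>"
    by (simp_all add: le_floor_iff)
  then show "q \<in> {-\<lfloor>r\<rfloor>..\<lfloor>r\<rfloor>} \<times> {-\<lfloor>r\<rfloor>..\<lfloor>r\<rfloor>}"
    by (cases q) auto
qed

lemma finite_fermi_ball: "finite (fermi_ball r)"
  using fermi_ball_subset_square by (rule finite_subset) simp

lemma square_subset_fermi_ball:
  assumes "0 \<le> r" "2 * (of_int M)\<^sup>2 < r\<^sup>2"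
  shows "{-M..M} \<times> {-M..M} \<subseteq> fermi_ball r"
proof
  fix q :: "int \<times> int" assume "q \<in> {-M..M} \<times> {-M..M}"
  then have "(fst q)\<^sup>2 \<le> M\<^sup>2" "(snd q)\<^sup>2 \<le> M\<^sup>2"
    by (auto simp: abs_le_square_iff[symmetric] abs_le_iff)
  then have "sq_norm_int q \<le> 2 * M\<^sup>2"
    unfolding sq_norm_int_def by linarith
  then have "of_int (sq_norm_int q) \<le> 2 * (of_int M :: real)\<^sup>2"
    by (metis of_int_le_iff of_int_mult of_int_numeral of_int_power)
  then have "of_int (sq_norm_int q) < r\<^sup>2"
    using assms(2) by linarith
  then have "(norm (to_R2 q))\<^sup>2 < r\<^sup>2"
    by (simp add: norm_to_R2_sq)
  then show "q \<in> fermi_ball r"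
    using assms(1) by (simp add: fermi_ball_def power_less_imp_less_base)
qed

lemma card_int_square:
  assumes "0 \<le> M"
  shows "real (card ({-M..M} \<times> {-M..M})) = (2 * of_int M + 1)\<^sup>2"
  using assms by (simp add: card_cartesian_product power2_eq_square)

lemma card_fermi_ball_le:
  assumes "0 \<le> r"
  shows "real (card (fermi_ball r)) \<le> (2 * r + 1)\<^sup>2"
proof -
  have "real (card (fermi_ball r)) \<le> real (card ({-\<lfloor>r\<rfloor>..\<lfloor>r\<rfloor>} \<times> {-\<lfloor>r\<rfloor>..\<lfloor>r\<rfloor>}))"
    by (intro of_nat_mono card_mono fermi_ball_subset_square) simp
  also have "\<dots> = (2 * of_int \<lfloor>r\<rfloor> + 1)\<^sup>2"
    using assms by (intro card_int_square) simp
  also have "\<dots> \<le> (2 * r + 1)\<^sup>2"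
    using assms by (intro power_mono) auto
  finally show ?thesis .
qed

lemma zero_in_fermi_ball: "0 < r \<Longrightarrow> 0 \<in> fermi_ball r"
  by (simp add: fermi_ball_def to_R2_def zero_prod_def)

lemma card_fermi_ball_ge:
  assumes "0 < r"
  shows "r\<^sup>2 / 4 \<le> real (card (fermi_ball r))" and "1 \<le> card (fermi_ball r)"
proof -
  define M where "M = \<lceil>r / 2\<rceil> - 1"
  have "0 \<le> M" "real_of_int M = of_int \<lceil>r / 2\<rceil> - 1" "1 \<le> real_of_int \<lceil>r / 2\<rceil>"
    using assms by (simp_all add: M_def)
  moreover have "r / 2 \<le> of_int \<lceil>r / 2\<rceil>" "of_int \<lceil>r / 2\<rceil> < r / 2 + 1"
    using ceiling_correct[of "r / 2"] by simp_all
  ultimately have M: "0 \<le> M" "of_int M < r / 2" "r / 2 \<le> 2 * of_int M + 1"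
    by argo+
  have "(of_int M)\<^sup>2 < (r / 2)\<^sup>2"
    using M by (intro power_strict_mono) auto
  then have "4 * (of_int M)\<^sup>2 < r\<^sup>2"
    by (simp add: power_divide)
  then have "2 * (of_int M)\<^sup>2 < r\<^sup>2"
    using zero_le_power2[of "real_of_int M"] by linarith
  then have "real (card ({-M..M} \<times> {-M..M})) \<le> real (card (fermi_ball r))"
    using assms by (intro of_nat_mono card_mono finite_fermi_ball square_subset_fermi_ball) auto
  then have square: "(2 * of_int M + 1)\<^sup>2 \<le> real (card (fermi_ball r))"
    unfolding card_int_square[OF M(1)] .
  have "(r / 2)\<^sup>2 \<le> (2 * of_int M + 1)\<^sup>2"
    using M assms by (intro power_mono) auto
  then show "r\<^sup>2 / 4 \<le> real (card (fermi_ball r))"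
    using square by (simp add: power_divide)
  show "1 \<le> card (fermi_ball r)"
    using assms zero_in_fermi_ball finite_fermi_ball by (simp add: Suc_le_eq card_gt_0_iff) blast
qed

lemma Inf_sq_norm_outside_fermi_ball_ge_1:
  assumes "0 < r"
  shows "1 \<le> Inf {(norm (to_R2 p))\<^sup>2 | p. p \<notin> fermi_ball r}"
proof (rule cInf_greatest)
  have "r \<le> \<bar>real_of_int \<lceil>r\<rceil>\<bar>"
    by (metis abs_ge_self le_of_int_ceiling order_trans)
  then have "(\<lceil>r\<rceil>, 0) \<notin> fermi_ball r"
    by (simp add: fermi_ball_def to_R2_def norm_Pair not_less)
  then show "{(norm (to_R2 p))\<^sup>2 | p. p \<notin> fermi_ball r} \<noteq> {}"
    by blast
  fix x assume "x \<in> {(norm (to_R2 p))\<^sup>2 | p. p \<notin> fermi_ball r}"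
  then obtain p where "p \<notin> fermi_ball r" "x = (norm (to_R2 p))\<^sup>2"
    by blast
  moreover from this have "p \<noteq> 0"
    using zero_in_fermi_ball[OF assms] by auto
  ultimately show "1 \<le> x"
    using sq_norm_int_ge_1 by (simp add: norm_to_R2_sq)
qed

lemma Sup_sq_norm_fermi_ball_ge_0:
  assumes "0 < r"
  shows "0 \<le> Sup {(norm (to_R2 q))\<^sup>2 | q. q \<in> fermi_ball r}"
proof (rule cSup_upper)
  have "(norm (to_R2 0))\<^sup>2 \<in> {(norm (to_R2 q))\<^sup>2 | q. q \<in> fermi_ball r}"
    using zero_in_fermi_ball[OF assms] by blast
  then show "0 \<in> {(norm (to_R2 q))\<^sup>2 | q. q \<in> fermi_ball r}"
    by (simp add: to_R2_def zero_prod_def)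
  show "bdd_above {(norm (to_R2 q))\<^sup>2 | q. q \<in> fermi_ball r}"
  proof (rule bdd_aboveI)
    fix x assume "x \<in> {(norm (to_R2 q))\<^sup>2 | q. q \<in> fermi_ball r}"
    then obtain q where "norm (to_R2 q) < r" "x = (norm (to_R2 q))\<^sup>2"
      unfolding fermi_ball_def by blast
    then show "x \<le> r\<^sup>2"
      by (simp add: power_mono)
  qed
qed

lemma admissible_kF_ge_half:
  assumes "admissible_kF kF"
  shows "1/2 \<le> kF"
proof -
  have "0 < kF"
    using assms by (simp add: admissible_kF_def)
  have "kF\<^sup>2 = (Inf {(norm (to_R2 p))\<^sup>2 | p. p \<notin> fermi_ball kF}
              + Sup {(norm (to_R2 q))\<^sup>2 | q. q \<in> fermi_ball kF}) / 2"
    using assms by (simp add: admissible_kF_def)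
  then have "1/4 < kF\<^sup>2"
    using Inf_sq_norm_outside_fermi_ball_ge_1[OF \<open>0 < kF\<close>] Sup_sq_norm_fermi_ball_ge_0[OF \<open>0 < kF\<close>]
    by argo
  then have "(1/2)\<^sup>2 < kF\<^sup>2"
    by (simp add: power_divide)
  then have "1/2 < kF"
    by (rule power_less_imp_less_base) (use \<open>0 < kF\<close> in simp)
  then show ?thesis
    by simp
qed

lemma admissible_kF_card_fermi_ball:
  assumes "admissible_kF kF"
  defines "N \<equiv> real (card (fermi_ball kF))"
  shows "1 \<le> N" and "kF \<le> 2 * sqrt N" and "sqrt N \<le> 4 * kF"
proof -
  have kF: "1/2 \<le> kF"
    by (rule admissible_kF_ge_half[OF assms(1)])
  show "1 \<le> N"
    using card_fermi_ball_ge(2)[of kF] kF by (simp add: N_def)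
  have "(kF / 2)\<^sup>2 \<le> N"
    using card_fermi_ball_ge(1)[of kF] kF by (simp add: N_def power_divide)
  then have "kF / 2 \<le> sqrt N"
    by (rule real_le_rsqrt)
  then show "kF \<le> 2 * sqrt N"
    by simp
  have "N \<le> (2 * kF + 1)\<^sup>2"
    using card_fermi_ball_le[of kF] kF by (simp add: N_def)
  also have "\<dots> \<le> (4 * kF)\<^sup>2"
    using kF by (intro power_mono) auto
  finally have "sqrt N \<le> sqrt ((4 * kF)\<^sup>2)"
    by (rule real_sqrt_le_mono)
  also have "\<dots> = 4 * kF"
    using kF by (simp only: real_sqrt_abs)
  finally show "sqrt N \<le> 4 * kF" .
qed

section \<open>Lattice points in a lens\<close>

(* For R = k_F and T = (k_F + \<Delta>)^2 - k_F^2 this contains the lattice points of A \<inter> (A + k). *)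
definition lattice_lens :: "real \<Rightarrow> real \<Rightarrow> int \<times> int \<Rightarrow> (int \<times> int) set" where
  "lattice_lens R T k = {p.
     R\<^sup>2 \<le> of_int (sq_norm_int p) \<and> of_int (sq_norm_int p) < R\<^sup>2 + T \<and>
     R\<^sup>2 \<le> of_int (sq_norm_int (p - k)) \<and> of_int (sq_norm_int (p - k)) < R\<^sup>2 + T}"

lemma lattice_lens_coordinates:
  assumes "p \<in> lattice_lens R T k"
  defines "n \<equiv> real_of_int (sq_norm_int k)"
    and "P \<equiv> real_of_int (dot_int p k)" and "U \<equiv> real_of_int (cross_int p k)"
  shows "\<bar>2 * P - n\<bar> < T"
    and "n * R\<^sup>2 - n\<^sup>2 / 4 - T\<^sup>2 / 4 \<le> U\<^sup>2" and "U\<^sup>2 \<le> n * R\<^sup>2 - n\<^sup>2 / 4 + n * T"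
    and "n * R\<^sup>2 - U\<^sup>2 \<le> P\<^sup>2" and "P\<^sup>2 \<le> n * R\<^sup>2 - U\<^sup>2 + n * T"
proof -
  define A where "A = real_of_int (sq_norm_int p)"
  define B where "B = real_of_int (sq_norm_int (p - k))"
  have n: "0 \<le> n"
    unfolding n_def sq_norm_int_def by simp
  have A: "R\<^sup>2 \<le> A" "A < R\<^sup>2 + T" and B: "R\<^sup>2 \<le> B" "B < R\<^sup>2 + T"
    using assms(1) unfolding lattice_lens_def A_def B_def by auto
  have lagrange: "P\<^sup>2 + U\<^sup>2 = n * A"
    unfolding P_def U_def n_def A_def
    by (metis dot_int_sq_plus_cross_int_sq mult.commute of_int_add of_int_mult of_int_power)
  have diff: "B = A - 2 * P + n"
    unfolding A_def B_def P_def n_def by (simp add: sq_norm_int_diff)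
  show "\<bar>2 * P - n\<bar> < T"
    using A B diff by linarith
  then have "(2 * P - n)\<^sup>2 \<le> T\<^sup>2"
    by (metis abs_le_square_iff abs_of_pos abs_ge_zero le_less_trans less_imp_le)
  moreover have "4 * U\<^sup>2 = 2 * (n * A) + 2 * (n * B) - (2 * P - n)\<^sup>2 - n\<^sup>2"
    using lagrange unfolding diff by (simp add: power2_eq_square algebra_simps)
  moreover have "n * R\<^sup>2 \<le> n * A" "n * R\<^sup>2 \<le> n * B" "n * A \<le> n * R\<^sup>2 + n * T" "n * B \<le> n * R\<^sup>2 + n * T"
    using A B n by (simp_all flip: distrib_left add: mult_left_mono)
  moreover have "0 \<le> (2 * P - n)\<^sup>2"
    by simp
  ultimately show "n * R\<^sup>2 - n\<^sup>2 / 4 - T\<^sup>2 / 4 \<le> U\<^sup>2" "U\<^sup>2 \<le> n * R\<^sup>2 - n\<^sup>2 / 4 + n * T"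
    by linarith+
  show "n * R\<^sup>2 - U\<^sup>2 \<le> P\<^sup>2" "P\<^sup>2 \<le> n * R\<^sup>2 - U\<^sup>2 + n * T"
    using lagrange \<open>n * R\<^sup>2 \<le> n * A\<close> \<open>n * A \<le> n * R\<^sup>2 + n * T\<close> by (simp_all add: algebra_simps)
qed

lemma finite_lattice_lens: "finite (lattice_lens R T k)"
proof (rule finite_subset[OF _ finite_fermi_ball])
  show "lattice_lens R T k \<subseteq> fermi_ball (sqrt (R\<^sup>2 + T))"
    by (auto simp: lattice_lens_def fermi_ball_def norm_to_R2_sq[symmetric] real_less_rsqrt)
qed

lemma card_lattice_lens_cross_fibre_le:
  assumes "0 \<le> T" "k \<noteq> 0"
  shows "real (card {p \<in> lattice_lens R T k. cross_int p k = u}) \<le> 2 * (sqrt T + 2)"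
proof -
  define F where "F = {p \<in> lattice_lens R T k. cross_int p k = u}"
  define n where "n = real_of_int (sq_norm_int k)"
  define P where "P = (\<lambda>p. real_of_int (dot_int p k))"
  define L where "L = n * R\<^sup>2 - (of_int u)\<^sup>2"
  have n: "1 \<le> n"
    using sq_norm_int_ge_1[OF assms(2)] by (simp add: n_def)
  have band: "L \<le> (P p)\<^sup>2 \<and> (P p)\<^sup>2 \<le> L + n * T" if "p \<in> F" for p
    using that lattice_lens_coordinates(4,5)[of p R T k] by (auto simp: F_def L_def P_def n_def)
  have "sqrt n \<le> \<bar>P p - P q\<bar>" if "p \<in> F" "q \<in> F" "p \<noteq> q" for p q
  proof -
    have "n \<le> (P p - P q)\<^sup>2"
      using that dot_cross_separated[of p q k] by (simp add: F_def P_def n_def)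
    then show ?thesis
      by (metis real_sqrt_abs real_sqrt_le_mono)
  qed
  then have "card F = card ((\<lambda>p. \<lfloor>P p / sqrt n\<rfloor>) ` F)"
    using n by (intro card_image[symmetric] inj_on_floor_div) auto
  also have "real \<dots> \<le> 2 * ((sqrt (max 0 (L + n * T)) - sqrt (max 0 L)) / sqrt n + 2)"
    using n assms band by (intro card_floor_div_image_sq_band) auto
  also have "\<dots> \<le> 2 * (sqrt T + 2)"
  proof -
    have "sqrt (max 0 (L + n * T)) - sqrt (max 0 L) \<le> sqrt n * sqrt T"
      using sqrt_band_width_le_sqrt[of L "L + n * T"] n assms by (simp add: real_sqrt_mult)
    then show ?thesis
      using n by (simp add: divide_le_eq field_simps)
  qed
  finally show ?thesis
    unfolding F_def .
qed

(*
  On lattice_lens R T k, with n = |k|^2, the square of U = p \<times> k ranges over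
  [n R^2 - n^2/4 - T^2/4, n R^2 - n^2/4 + n T] (lattice_lens_coordinates);
  this is the length of the corresponding range of |U|.
*)
definition cross_band_width :: "real \<Rightarrow> real \<Rightarrow> real \<Rightarrow> real" where
  "cross_band_width n R T =
     sqrt (max 0 (n * R\<^sup>2 - n\<^sup>2 / 4 + n * T)) - sqrt (max 0 (n * R\<^sup>2 - n\<^sup>2 / 4 - T\<^sup>2 / 4))"

lemma cross_band_bounds_ordered:
  fixes n R T :: real
  assumes "0 \<le> n" "0 \<le> T"
  shows "n * R\<^sup>2 - n\<^sup>2 / 4 - T\<^sup>2 / 4 \<le> n * R\<^sup>2 - n\<^sup>2 / 4 + n * T"
  using assms zero_le_power2[of T] mult_nonneg_nonneg[of n T] by linarith

lemma cross_band_width_nonneg: "0 \<le> n \<Longrightarrow> 0 \<le> T \<Longrightarrow> 0 \<le> cross_band_width n R T"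
  unfolding cross_band_width_def diff_ge_0_iff_ge
  by (intro real_sqrt_le_mono max.mono cross_band_bounds_ordered) auto

lemma cross_band_width_le_sqrt:
  assumes "0 \<le> n" "0 \<le> T"
  shows "cross_band_width n R T \<le> sqrt n * sqrt T + T / 2"
proof -
  have "cross_band_width n R T \<le> sqrt (n * T + T\<^sup>2 / 4)"
    using sqrt_band_width_le_sqrt[OF cross_band_bounds_ordered[OF assms]]
    by (simp add: cross_band_width_def)
  also have "\<dots> \<le> sqrt n * sqrt T + T / 2"
    using assms by (intro real_le_lsqrt) (auto simp: power2_eq_square algebra_simps)
  finally show ?thesis .
qed

lemma cross_band_upper_ge:
  assumes "1/2 \<le> R" "0 \<le> n" "n \<le> R" "0 \<le> T"
  shows "sqrt n * R / 2 \<le> sqrt (max 0 (n * R\<^sup>2 - n\<^sup>2 / 4 + n * T))"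
proof (rule real_le_rsqrt)
  have "0 \<le> R * (2 * R - 1)"
    using assms by simp
  then have "R \<le> 2 * R\<^sup>2"
    by (simp add: power2_eq_square algebra_simps)
  then have "n * n \<le> n * (2 * R\<^sup>2)"
    using assms by (intro mult_left_mono) auto
  then have "n\<^sup>2 \<le> 2 * (n * R\<^sup>2)"
    by (simp add: power2_eq_square algebra_simps)
  moreover have "0 \<le> n * R\<^sup>2" "0 \<le> n * T"
    using assms by simp_all
  moreover have "(sqrt n * R / 2)\<^sup>2 = n * R\<^sup>2 / 4"
    using assms by (simp add: power_mult_distrib power_divide)
  ultimately show "(sqrt n * R / 2)\<^sup>2 \<le> max 0 (n * R\<^sup>2 - n\<^sup>2 / 4 + n * T)"
    by argo
qed

lemma cross_band_width_le_short:
  assumes R: "1/2 \<le> R" and T: "0 < T" and n: "1 \<le> n" "n \<le> R"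
  shows "cross_band_width n R T \<le> 2 * (T / sqrt R) + (T / sqrt R)\<^sup>2 / 2"
proof -
  define w where "w = cross_band_width n R T"
  \<comment> \<open>Since \<open>|p \<times> k| \<ge> \<surd>n R / 2\<close>, a band of width \<open>n T + T\<^sup>2 / 4\<close> in \<open>(p \<times> k)\<^sup>2\<close> is thin in \<open>|p \<times> k|\<close>.\<close>
  have "sqrt n * R / 2 * w \<le> sqrt (max 0 (n * R\<^sup>2 - n\<^sup>2 / 4 + n * T)) * w"
    using cross_band_upper_ge[OF R _ n(2)] cross_band_width_nonneg[of n T R] n T
    by (intro mult_right_mono) (auto simp: w_def)
  also have "\<dots> \<le> n * T + T\<^sup>2 / 4"
    using sqrt_band_width_le_div[OF cross_band_bounds_ordered[of n T R]] n T
    by (simp add: w_def cross_band_width_def)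
  also have "\<dots> \<le> sqrt n * sqrt R * T + sqrt n * T\<^sup>2 / 4"
  proof -
    have "sqrt n * sqrt n \<le> sqrt n * sqrt R"
      using n by (intro mult_left_mono) auto
    then have "n \<le> sqrt n * sqrt R"
      using n by simp
    moreover have "1 \<le> sqrt n"
      using n by simp
    ultimately show ?thesis
      using T by (intro add_mono mult_right_mono) (auto simp: mult_le_cancel_right1)
  qed
  also have "\<dots> = sqrt n * R / 2 * (2 * (T / sqrt R) + (T / sqrt R)\<^sup>2 / 2)"
    using R by (simp add: field_simps power2_eq_square)
  finally show ?thesis
    using n R by (simp add: w_def mult_le_cancel_left_pos)
qed

lemma card_floor_cross_image_le:
  assumes "0 < d" "0 \<le> T"
  shows "real (card ((\<lambda>p. \<lfloor>of_int (cross_int p k) / d\<rfloor>) ` lattice_lens R T k))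
    \<le> 2 * (cross_band_width (of_int (sq_norm_int k)) R T / d + 2)"
proof -
  define n where "n = real_of_int (sq_norm_int k)"
  have "n * R\<^sup>2 - n\<^sup>2 / 4 - T\<^sup>2 / 4 \<le> n * R\<^sup>2 - n\<^sup>2 / 4 + n * T"
    using assms by (intro cross_band_bounds_ordered) (auto simp: n_def sq_norm_int_def)
  then show ?thesis
    unfolding cross_band_width_def n_def[symmetric] using assms lattice_lens_coordinates(2,3)
    by (intro card_floor_div_image_sq_band) (auto simp: n_def)
qed

lemma card_floor_dot_image_le:
  assumes "0 < c" "0 < T"
  shows "real (card ((\<lambda>p. \<lfloor>of_int (dot_int p k) / c\<rfloor>) ` lattice_lens R T k)) \<le> T / c + 2"
proof -
  define n where "n = real_of_int (sq_norm_int k)"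
  have "real (card ((\<lambda>p. \<lfloor>of_int (dot_int p k) / c\<rfloor>) ` lattice_lens R T k))
      \<le> ((n + T) / 2 - (n - T) / 2) / c + 2"
  proof (rule card_floor_div_image_le)
    show "(n - T) / 2 \<le> of_int (dot_int p k) \<and> of_int (dot_int p k) \<le> (n + T) / 2"
      if "p \<in> lattice_lens R T k" for p
      using lattice_lens_coordinates(1)[OF that] unfolding abs_less_iff n_def by argo
  qed (use assms in auto)
  moreover have "(n + T) / 2 - (n - T) / 2 = T"
    by (simp add: field_simps)
  ultimately show ?thesis
    by simp
qed

lemma card_lattice_lens_le_short_k:
  assumes R: "1/2 \<le> R" and T: "0 < T" and k: "k \<noteq> 0" and short: "of_int (sq_norm_int k) \<le> R"
  shows "real (card (lattice_lens R T k)) \<le> 16 * (1 + sqrt T) * (1 + T / sqrt R + (T / sqrt R)\<^sup>2)"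
proof -
  define a where "a = T / sqrt R"
  have "0 \<le> a"
    using R T by (simp add: a_def)
  have "real (card (lattice_lens R T k))
      \<le> real (card ((\<lambda>p. cross_int p k) ` lattice_lens R T k)) * (2 * (sqrt T + 2))"
    using T k card_lattice_lens_cross_fibre_le
    by (intro card_le_card_image_mult_fibre_bound finite_lattice_lens) auto
  also have "\<dots> \<le> 2 * (2 * a + a\<^sup>2 / 2 + 2) * (2 * (sqrt T + 2))"
  proof (rule mult_right_mono)
    have "(\<lambda>p. cross_int p k) ` lattice_lens R T k
        = (\<lambda>p. \<lfloor>of_int (cross_int p k) / 1\<rfloor>) ` lattice_lens R T k"
      by simp
    then have "real (card ((\<lambda>p. cross_int p k) ` lattice_lens R T k))
        \<le> 2 * (cross_band_width (of_int (sq_norm_int k)) R T / 1 + 2)"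
      using card_floor_cross_image_le[of 1 T k R] T by simp
    also have "\<dots> \<le> 2 * (2 * a + a\<^sup>2 / 2 + 2)"
      using cross_band_width_le_short[OF R T _ short] sq_norm_int_ge_1[OF k] by (simp add: a_def)
    finally show "real (card ((\<lambda>p. cross_int p k) ` lattice_lens R T k)) \<le> 2 * (2 * a + a\<^sup>2 / 2 + 2)" .
  qed (use T in simp)
  also have "\<dots> \<le> (4 * (1 + a + a\<^sup>2)) * (4 * (1 + sqrt T))"
  proof (rule mult_mono)
    show "2 * (2 * a + a\<^sup>2 / 2 + 2) \<le> 4 * (1 + a + a\<^sup>2)"
      using \<open>0 \<le> a\<close> zero_le_power2[of a] by argo
    show "2 * (sqrt T + 2) \<le> 4 * (1 + sqrt T)"
      using T by simp
  qed (use \<open>0 \<le> a\<close> T in auto)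
  also have "\<dots> = 16 * (1 + sqrt T) * (1 + a + a\<^sup>2)"
    by (simp add: algebra_simps)
  finally show ?thesis
    unfolding a_def .
qed

lemma card_lattice_lens_le_cells:
  assumes "0 < T" "k \<noteq> 0"
  defines "n \<equiv> real_of_int (sq_norm_int k)"
  shows "real (card (lattice_lens R T k))
    \<le> (T / sqrt (n / 2) + 2) * (2 * (cross_band_width n R T / sqrt (n / 2) + 2))"
proof -
  define c where "c = sqrt (n / 2)"
  have "0 < n"
    using sq_norm_int_ge_1[OF assms(2)] by (simp add: n_def)
  then have c: "0 < c" "2 * c\<^sup>2 = n"
    by (simp_all add: c_def power_divide)
  \<comment> \<open>Two lattice points in one cell of side \<open>c\<close> would have \<open>(p \<cdot> k, p \<times> k)\<close> closer than \<open>|k|\<close>.\<close>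
  have "card (lattice_lens R T k)
      \<le> card ((\<lambda>p. \<lfloor>of_int (dot_int p k) / c\<rfloor>) ` lattice_lens R T k)
        * card ((\<lambda>p. \<lfloor>of_int (cross_int p k) / c\<rfloor>) ` lattice_lens R T k)"
    using finite_lattice_lens c dot_cross_separated
    by (intro card_le_card_floor_div_grid) (auto simp: n_def)
  then have "real (card (lattice_lens R T k))
      \<le> real (card ((\<lambda>p. \<lfloor>of_int (dot_int p k) / c\<rfloor>) ` lattice_lens R T k))
        * real (card ((\<lambda>p. \<lfloor>of_int (cross_int p k) / c\<rfloor>) ` lattice_lens R T k))"
    by (metis of_nat_le_iff of_nat_mult)
  also have "\<dots> \<le> (T / c + 2) * (2 * (cross_band_width n R T / c + 2))"
    using card_floor_dot_image_le[OF c(1) assms(1), of k R] card_floor_cross_image_le[OF c(1), of T k R]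
      cross_band_width_nonneg[of n T R] assms(1) c(1) \<open>0 < n\<close>
    by (intro mult_mono) (auto simp: n_def)
  finally show ?thesis
    unfolding c_def .
qed

lemma card_lattice_lens_le_long_k:
  assumes R: "0 < R" and T: "0 < T" and long: "R < of_int (sq_norm_int k)"
  shows "real (card (lattice_lens R T k)) \<le> 16 * (1 + sqrt T) * (1 + T / sqrt R + (T / sqrt R)\<^sup>2)"
proof -
  define n where "n = real_of_int (sq_norm_int k)"
  define c where "c = sqrt (n / 2)"
  define w where "w = cross_band_width n R T"
  define a where "a = T / sqrt R"
  have n: "R < n" "0 < n"
    using long R by (simp_all add: n_def)
  have "k \<noteq> 0"
    using long R by (auto simp: sq_norm_int_def)
  have "sqrt (n / 4) \<le> c"
    using n unfolding c_def by (intro real_sqrt_le_mono) auto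
  then have c: "0 < c" "sqrt n / 2 \<le> c"
    using n by (simp_all add: c_def real_sqrt_divide)
  have "real (card (lattice_lens R T k)) \<le> (T / c + 2) * (2 * (w / c + 2))"
    using card_lattice_lens_le_cells[OF T \<open>k \<noteq> 0\<close>, of R] by (simp add: c_def w_def n_def)
  also have "\<dots> \<le> (2 * a + 2) * (2 * (2 * sqrt T + a + 2))"
  proof (rule mult_mono)
    have "sqrt R / 2 \<le> c"
      using n c(2) real_sqrt_le_mono[of R n] by argo
    then have "T / c \<le> T / (sqrt R / 2)"
      using R T c(1) by (intro divide_left_mono) auto
    then show "T / c + 2 \<le> 2 * a + 2"
      by (simp add: a_def field_simps)
    have "w / c \<le> (sqrt n * sqrt T + T / 2) / (sqrt n / 2)"
      using cross_band_width_le_sqrt[of n T R] cross_band_width_nonneg[of n T R] c n T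
      by (intro frac_le) (auto simp: w_def)
    also have "\<dots> = 2 * sqrt T + T / sqrt n"
      using n by (simp add: field_simps)
    also have "\<dots> \<le> 2 * sqrt T + a"
      using n T R by (simp add: a_def divide_left_mono)
    finally show "2 * (w / c + 2) \<le> 2 * (2 * sqrt T + a + 2)"
      by simp
  qed (use T R c(1) cross_band_width_nonneg[of n T R] n in \<open>auto simp: a_def w_def\<close>)
  also have "\<dots> \<le> 16 * (1 + sqrt T) * (1 + a + a\<^sup>2)"
  proof -
    have "0 \<le> a" "0 \<le> sqrt T"
      using T R by (simp_all add: a_def)
    then have "0 \<le> a * sqrt T" "0 \<le> a\<^sup>2 * sqrt T"
      by simp_all
    moreover have "16 * (1 + sqrt T) * (1 + a + a\<^sup>2) - (2 * a + 2) * (2 * (2 * sqrt T + a + 2))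
        = 8 + 4 * a + 12 * a\<^sup>2 + 8 * sqrt T + 8 * (a * sqrt T) + 16 * (a\<^sup>2 * sqrt T)"
      by (simp add: power2_eq_square algebra_simps)
    ultimately show ?thesis
      using \<open>0 \<le> a\<close> \<open>0 \<le> sqrt T\<close> zero_le_power2[of a] by argo
  qed
  finally show ?thesis
    unfolding a_def .
qed

lemma card_lattice_lens_le:
  assumes "1/2 \<le> R" "0 < T" "k \<noteq> 0"
  shows "real (card (lattice_lens R T k)) \<le> 16 * (1 + sqrt T) * (1 + T / sqrt R + (T / sqrt R)\<^sup>2)"
proof (cases "of_int (sq_norm_int k) \<le> R")
  case True
  then show ?thesis
    using assms by (rule card_lattice_lens_le_short_k[rotated -1])
next
  case False
  then show ?thesis
    using assms by (intro card_lattice_lens_le_long_k) auto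
qed

lemma annulus_overlap_subset_lattice_lens:
  assumes "0 \<le> kF"
  shows "{q. to_R2 q \<in> annulus kF \<Delta> \<inter> (\<lambda>a. a + to_R2 k) ` annulus kF \<Delta>}
    \<subseteq> lattice_lens kF ((kF + \<Delta>)\<^sup>2 - kF\<^sup>2) k"
proof -
  have sq: "kF\<^sup>2 \<le> (norm x)\<^sup>2 \<and> (norm x)\<^sup>2 < (kF + \<Delta>)\<^sup>2" if "x \<in> annulus kF \<Delta>" for x :: "real \<times> real"
  proof -
    have "kF \<le> norm x" "norm x < kF + \<Delta>"
      using that by (simp_all add: annulus_def)
    then show ?thesis
      using assms by (simp add: power_mono power_strict_mono)
  qed
  show ?thesis
  proof
    fix q assume "q \<in> {q. to_R2 q \<in> annulus kF \<Delta> \<inter> (\<lambda>a. a + to_R2 k) ` annulus kF \<Delta>}"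
    then have "to_R2 q \<in> annulus kF \<Delta>" "to_R2 (q - k) \<in> annulus kF \<Delta>"
      by (auto simp: to_R2_diff)
    then show "q \<in> lattice_lens kF ((kF + \<Delta>)\<^sup>2 - kF\<^sup>2) k"
      using sq[of "to_R2 q"] sq[of "to_R2 (q - k)"] by (simp add: lattice_lens_def norm_to_R2_sq)
  qed
qed

lemma annulus_thickness_sq_le:
  fixes N kF \<Delta> C' \<alpha> :: real
  assumes "0 \<le> \<alpha>" "1 \<le> N" "0 \<le> kF" "kF \<le> 2 * sqrt N" "0 < \<Delta>" "\<Delta> < C' * N powr (-\<alpha>)"
  shows "(kF + \<Delta>)\<^sup>2 - kF\<^sup>2 \<le> C' * (4 + C') * N powr (1/2 - \<alpha>)"
proof -
  have "N powr (-\<alpha>) \<le> N powr 0"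
    using assms by (intro powr_mono) auto
  then have "N powr (-\<alpha>) \<le> 1"
    using assms by simp
  have "0 < C' * N powr (-\<alpha>)"
    using assms by linarith
  then have "0 < C'"
    using assms by (simp add: zero_less_mult_iff)
  have "\<Delta> \<le> C' * 1"
    using assms \<open>N powr (-\<alpha>) \<le> 1\<close> \<open>0 < C'\<close> mult_left_mono[of "N powr (-\<alpha>)" 1 C'] by linarith
  also have "\<dots> \<le> C' * sqrt N"
    using assms \<open>0 < C'\<close> by (intro mult_left_mono) auto
  finally have "\<Delta> \<le> C' * sqrt N" .
  have "(kF + \<Delta>)\<^sup>2 - kF\<^sup>2 = \<Delta> * (2 * kF + \<Delta>)"
    by (simp add: power2_eq_square algebra_simps)
  also have "\<dots> \<le> \<Delta> * ((4 + C') * sqrt N)"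
    using assms \<open>\<Delta> \<le> C' * sqrt N\<close> by (intro mult_left_mono) (auto simp: algebra_simps)
  also have "\<dots> \<le> C' * N powr (-\<alpha>) * ((4 + C') * sqrt N)"
    using assms \<open>0 < C'\<close> by (intro mult_right_mono) auto
  also have "\<dots> = C' * (4 + C') * (N powr (-\<alpha>) * N powr (1/2))"
    using assms by (simp add: powr_half_sqrt)
  also have "\<dots> = C' * (4 + C') * N powr (1/2 - \<alpha>)"
    by (simp flip: powr_add)
  finally show ?thesis .
qed

lemma one_add_add_sq_le:
  fixes a b x :: real
  assumes "0 \<le> a" "a \<le> b * x" "0 \<le> b" "0 \<le> x"
  shows "1 + a + a\<^sup>2 \<le> 2 * (1 + b + b\<^sup>2) * (1 + x\<^sup>2)"
proof -
  have "a\<^sup>2 \<le> (b * x)\<^sup>2"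
    using assms by (intro power_mono) auto
  then have "1 + a + a\<^sup>2 \<le> 1 + b * x + b\<^sup>2 * x\<^sup>2"
    using assms by (simp add: power_mult_distrib)
  also have "\<dots> \<le> (1 + b + b\<^sup>2) * (1 + x + x\<^sup>2)"
    using assms by (simp add: power2_eq_square algebra_simps)
  also have "\<dots> \<le> (1 + b + b\<^sup>2) * (2 * (1 + x\<^sup>2))"
  proof (rule mult_left_mono)
    have "(x - 1)\<^sup>2 = x\<^sup>2 - 2 * x + 1"
      by (simp add: power2_eq_square algebra_simps)
    then show "1 + x + x\<^sup>2 \<le> 2 * (1 + x\<^sup>2)"
      using zero_le_power2[of "x - 1"] \<open>0 \<le> x\<close> by argo
  qed (use assms in simp)
  finally show ?thesis
    by (simp only: mult_ac)
qed

lemma div_sqrt_le_powr: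
  fixes N kF T c \<alpha> :: real
  assumes "1 \<le> N" "sqrt N \<le> 4 * kF" "0 \<le> c" "T \<le> c * N powr (1/2 - \<alpha>)"
  shows "T / sqrt kF \<le> 2 * c * N powr (1/4 - \<alpha>)"
proof -
  have "sqrt (sqrt N / 4) \<le> sqrt kF"
    using assms by (intro real_sqrt_le_mono) simp
  moreover have "sqrt (sqrt N / 4) = N powr (1/4) / 2"
    using assms by (simp add: real_sqrt_divide powr_half_sqrt[symmetric] powr_powr)
  ultimately have "N powr (1/4) / 2 \<le> sqrt kF"
    by simp
  then have "T / sqrt kF \<le> c * N powr (1/2 - \<alpha>) / (N powr (1/4) / 2)"
    using assms by (intro frac_le) auto
  also have "N powr (1/2 - \<alpha>) = N powr (1/4) * N powr (1/4 - \<alpha>)"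
    by (simp flip: powr_add)
  finally show ?thesis
    using assms by simp
qed

lemma lattice_lens_bound_le_powr:
  fixes N kF T c \<alpha> :: real
  assumes "\<alpha> \<le> 1/2" "1 \<le> N" "sqrt N \<le> 4 * kF" "0 \<le> c" "0 \<le> T" "T \<le> c * N powr (1/2 - \<alpha>)"
  shows "(1 + sqrt T) * (1 + T / sqrt kF + (T / sqrt kF)\<^sup>2)
    \<le> 2 * (1 + sqrt c) * (1 + 2 * c + (2 * c)\<^sup>2) * (N powr (3/4 - 5/2 * \<alpha>) + N powr (1/4 - 1/2 * \<alpha>))"
proof -
  define q where "q = N powr (1/4 - 1/2 * \<alpha>)"
  define x where "x = N powr (1/4 - \<alpha>)"
  have "1 \<le> sqrt N"
    using assms by simp
  then have "0 < kF"
    using assms by linarith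
  have "1 \<le> q"
    using assms unfolding q_def by (intro ge_one_powr_ge_zero) auto
  have "sqrt T \<le> sqrt (c * N powr (1/2 - \<alpha>))"
    using assms(6) by (rule real_sqrt_le_mono)
  also have "\<dots> = sqrt c * q"
    using assms by (simp add: q_def real_sqrt_mult powr_half_sqrt_powr[symmetric] field_simps)
  finally have "1 + sqrt T \<le> (1 + sqrt c) * q"
    using \<open>1 \<le> q\<close> by (simp add: algebra_simps)
  moreover have "1 + T / sqrt kF + (T / sqrt kF)\<^sup>2 \<le> 2 * (1 + 2 * c + (2 * c)\<^sup>2) * (1 + x\<^sup>2)"
    using assms \<open>0 < kF\<close> div_sqrt_le_powr[of N kF c T \<alpha>]
    by (intro one_add_add_sq_le) (auto simp: x_def)
  ultimately have "(1 + sqrt T) * (1 + T / sqrt kF + (T / sqrt kF)\<^sup>2)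
      \<le> (1 + sqrt c) * q * (2 * (1 + 2 * c + (2 * c)\<^sup>2) * (1 + x\<^sup>2))"
    using \<open>1 \<le> q\<close> \<open>0 < kF\<close> assms by (intro mult_mono) auto
  also have "\<dots> = 2 * (1 + sqrt c) * (1 + 2 * c + (2 * c)\<^sup>2) * (q * (1 + x\<^sup>2))"
    by (simp only: mult_ac)
  also have "q * (1 + x\<^sup>2) = N powr (3/4 - 5/2 * \<alpha>) + N powr (1/4 - 1/2 * \<alpha>)"
  proof -
    have "q * x\<^sup>2 = N powr ((1/4 - 1/2 * \<alpha>) + (1/4 - \<alpha>) + (1/4 - \<alpha>))"
      unfolding q_def x_def by (simp only: power2_eq_square powr_add mult.assoc)
    also have "(1/4 - 1/2 * \<alpha>) + (1/4 - \<alpha>) + (1/4 - \<alpha>) = 3/4 - 5/2 * \<alpha>"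
      by simp
    finally show ?thesis
      by (simp add: distrib_left q_def)
  qed
  finally show ?thesis .
qed

lemma card_annulus_overlap_le:
  fixes \<alpha> C' kF \<Delta> :: real
  assumes "0 < \<alpha>" "\<alpha> \<le> 1/2" "admissible_kF kF" "k \<noteq> 0"
    and "0 < \<Delta>" "\<Delta> < C' * real (card (fermi_ball kF)) powr (-\<alpha>)"
  defines "N \<equiv> real (card (fermi_ball kF))" and "c \<equiv> C' * (4 + C')"
  shows "real (card {q. to_R2 q \<in> annulus kF \<Delta> \<inter> (\<lambda>a. a + to_R2 k) ` annulus kF \<Delta>})
    \<le> 32 * (1 + sqrt c) * (1 + 2 * c + (2 * c)\<^sup>2) * (N powr (3/4 - 5/2 * \<alpha>) + N powr (1/4 - 1/2 * \<alpha>))"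
proof -
  define T where "T = (kF + \<Delta>)\<^sup>2 - kF\<^sup>2"
  note N = admissible_kF_card_fermi_ball[OF assms(3), folded N_def]
  have kF: "1/2 \<le> kF"
    by (rule admissible_kF_ge_half[OF assms(3)])
  have "0 < T"
    using kF assms by (simp add: T_def power_strict_mono)
  have "T \<le> c * N powr (1/2 - \<alpha>)"
    unfolding T_def c_def using assms N kF by (intro annulus_thickness_sq_le) (auto simp: N_def)
  have "0 < C' * N powr (-\<alpha>)"
    using assms unfolding N_def by linarith
  then have "0 < C'"
    using N(1) by (simp add: zero_less_mult_iff)
  then have "0 \<le> c"
    by (simp add: c_def)
  have "real (card {q. to_R2 q \<in> annulus kF \<Delta> \<inter> (\<lambda>a. a + to_R2 k) ` annulus kF \<Delta>})
      \<le> real (card (lattice_lens kF T k))"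
    unfolding T_def using kF
    by (intro of_nat_mono card_mono finite_lattice_lens annulus_overlap_subset_lattice_lens) auto
  also have "\<dots> \<le> 16 * ((1 + sqrt T) * (1 + T / sqrt kF + (T / sqrt kF)\<^sup>2))"
    using card_lattice_lens_le[OF kF \<open>0 < T\<close> assms(4)] by (simp only: mult.assoc)
  also have "\<dots> \<le> 16 * (2 * (1 + sqrt c) * (1 + 2 * c + (2 * c)\<^sup>2)
      * (N powr (3/4 - 5/2 * \<alpha>) + N powr (1/4 - 1/2 * \<alpha>)))"
    using assms N \<open>0 \<le> c\<close> \<open>0 < T\<close> \<open>T \<le> c * N powr (1/2 - \<alpha>)\<close>
    by (intro mult_left_mono lattice_lens_bound_le_powr) auto
  also have "\<dots> = 32 * (1 + sqrt c) * (1 + 2 * c + (2 * c)\<^sup>2)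
      * (N powr (3/4 - 5/2 * \<alpha>) + N powr (1/4 - 1/2 * \<alpha>))"
    by simp
  finally show ?thesis .
qed

theorem lemmaA4:
  fixes \<alpha> c C' :: real
  assumes "0 < \<alpha>" and "\<alpha> < 1/2" and "0 < c" and "c < C'"
  shows "\<exists>C > 0. \<forall>kF \<Delta> (k :: int \<times> int).
           admissible_kF kF \<longrightarrow>
           c * real (card (fermi_ball kF)) powr (-\<alpha>) < \<Delta> \<longrightarrow>
           \<Delta> < C' * real (card (fermi_ball kF)) powr (-\<alpha>) \<longrightarrow>
           k \<noteq> (0, 0) \<longrightarrow>
           real (card {q :: int \<times> int. to_R2 q \<in> annulus kF \<Delta> \<inter>
                          ((\<lambda>a. a + to_R2 k) ` annulus kF \<Delta>)})
             \<le> C * (real (card (fermi_ball kF)) powr (3/4 - 5/2 * \<alpha>)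
                    + real (card (fermi_ball kF)) powr (1/4 - 1/2 * \<alpha>))"
proof -
  define c' where "c' = C' * (4 + C')"
  define K where "K = 32 * (1 + sqrt c') * (1 + 2 * c' + (2 * c')\<^sup>2)"
  have "0 \<le> c'"
    using assms by (simp add: c'_def)
  then have "0 < K"
    by (simp add: K_def add_pos_nonneg)
  show ?thesis
  proof (intro exI[of _ K] conjI allI impI)
    fix kF \<Delta> :: real and k :: "int \<times> int"
    assume adm: "admissible_kF kF" and k: "k \<noteq> (0, 0)"
      and lower: "c * real (card (fermi_ball kF)) powr (-\<alpha>) < \<Delta>"
      and upper: "\<Delta> < C' * real (card (fermi_ball kF)) powr (-\<alpha>)"
    have "0 < c * real (card (fermi_ball kF)) powr (-\<alpha>)"
      using assms admissible_kF_card_fermi_ball(1)[OF adm] by simp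
    then have "0 < \<Delta>"
      using lower by linarith
    then show "real (card {q. to_R2 q \<in> annulus kF \<Delta> \<inter> (\<lambda>a. a + to_R2 k) ` annulus kF \<Delta>})
        \<le> K * (real (card (fermi_ball kF)) powr (3/4 - 5/2 * \<alpha>)
               + real (card (fermi_ball kF)) powr (1/4 - 1/2 * \<alpha>))"
      unfolding K_def c'_def using assms adm k upper
      by (intro card_annulus_overlap_le) (auto simp: zero_prod_def)
  qed fact
qed

end
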